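(* Let $a,b$ be positive integers with $\gcd(a,b)=1$. For all $\pi\in\mathcal{D}_{b,-a}(a,b)$, $$\mathrm{word}(\mathrm{G}_{b,a}(\pi))=\mathrm{sw}^+_{b,-a}\circ\mathrm{rev}(\mathrm{word}(\pi)).$$
   Context: Partitions are drawn in English convention in the first quadrant; a partition with at most $a$ parts, each at most $b$, has as frontier a lattice path from $(0,0)$ to $(b,a)$ with unit north (N) and east (E) steps, its diagram consisting of the unit squares above and to the left of the path; $\mathrm{word}(\lambda)\in\{\mathrm{N},\mathrm{E}\}^*$ is the word of this path. $\mathrm{rev}$ reverses a word. The $(b,-a)$-level of a lattice point $(x,y)$ is $by-ax$; a unit square $[x,x+1]\times[y,y+1]$ (any integers $x,y$) has the level of its southeast corner $(x+1,y)$. $\mathcal{D}_{b,-a}(a,b)$ is the set of partitions fitting in the $a\times b$ rectangle whose frontier path visits only lattice points of nonnegative level. The map $\mathrm{G}_{b,a}$: for $\pi\in\mathcal{D}_{b,-a}(a,b)$, its $b$-generators $\beta_1<\beta_2<\cdots<\beta_b$ are the levels of the squares immediately above the $b$ east steps of the frontier path (the square $[x,x+1]\times[y,y+1]$ for an east step from $(x,y)$ to $(x+1,y)$). Let $\Delta^c$ be the finite set of levels of unit squares lying above the line $by=ax$ and below the frontier path of $\pi$. For each $i$ set $g_{b,a}(\beta_i)=|\{\beta_i,\beta_i+1,\ldots,\beta_i+a-1\}\cap\Delta^c|$. Then $\mathrm{G}_{b,a}(\pi)$ is the partition whose $i$-th column has length $g_{b,a}(\beta_i)$ for $1\le i\le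 b$, regarded as fitting in the $a\times b$ rectangle. For a word $w=w_1\cdots w_n$, set $l_0=0$, $l_i=l_{i-1}+b$ if $w_i=\mathrm{N}$, $l_i=l_{i-1}-a$ if $w_i=\mathrm{E}$. $\mathrm{sw}^+_{b,-a}(w)$ is obtained by: for $k=0,-1,-2,\ldots$ and then $k=\ldots,3,2,1$ (all nonpositive values in decreasing order, then all positive values in decreasing order), scan $w$ from left to right and append each $w_i$ ($i\ge1$) with $l_i=k$. *)

theory Defs
  imports Main
begin

datatype step = N | E

text \<open>A partition fitting in the a x b rectangle is represented by its list of
  column lengths (left to right, padded with zeros to exactly b columns).\<close>
definition is_partition_in_box :: "nat \<Rightarrow> nat \<Rightarrow> nat list \<Rightarrow> bool" where
  "is_partition_in_box a b cs \<longleftrightarrow>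
     length cs = b \<and> sorted (rev cs) \<and> (\<forall>c\<in>set cs. c \<le> a)"

text \<open>Frontier word: the path from (0,0) to (b,a); the east step below column i is at
  height a - (i-th column length); the diagram lies above and to the left of the path.\<close>
fun word_aux :: "nat \<Rightarrow> nat \<Rightarrow> nat list \<Rightarrow> step list" where
  "word_aux a h [] = replicate (a - h) N"
| "word_aux a h (c # cs) = replicate ((a - c) - h) N @ [E] @ word_aux a (a - c) cs"

definition word :: "nat \<Rightarrow> nat list \<Rightarrow> step list" where
  "word a cs = word_aux a 0 cs"

definition lvl :: "nat \<Rightarrow> nat \<Rightarrow> int \<Rightarrow> int \<Rightarrow> int" where
  "lvl a b x y = int b * y - int a * x"

definition pt :: "step list \<Rightarrow> nat \<Rightarrow> int \<times> int" where
  "pt w k = (int (count_list (take k w) E), int (count_list (take k w) N))"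

definition Dset :: "nat \<Rightarrow> nat \<Rightarrow> nat list set" where
  "Dset a b = {cs. is_partition_in_box a b cs \<and>
     (\<forall>k\<le>length (word a cs). lvl a b (fst (pt (word a cs) k)) (snd (pt (word a cs) k)) \<ge> 0)}"

fun eheights :: "step list \<Rightarrow> nat list" where
  "eheights [] = []"
| "eheights (N # w) = map Suc (eheights w)"
| "eheights (E # w) = 0 # eheights w"

text \<open>Levels of the squares immediately above the east steps (square [x,x+1]x[y,y+1]
  for the step (x,y)->(x+1,y), level of its SE corner (x+1,y)).\<close>
definition gens :: "nat \<Rightarrow> nat \<Rightarrow> step list \<Rightarrow> int list" where
  "gens a b w = map (\<lambda>x. lvl a b (int x + 1) (int (eheights w ! x))) [0..<length (eheights w)]"

text \<open>Levels of unit squares lying (weakly) above the line by = ax and below the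
  frontier path.\<close>
definition Deltac :: "nat \<Rightarrow> nat \<Rightarrow> step list \<Rightarrow> int set" where
  "Deltac a b w = {lvl a b (int x + 1) y | x y.
      x < length (eheights w) \<and> 0 \<le> y \<and> y < int (eheights w ! x) \<and> lvl a b (int x + 1) y \<ge> 0}"

definition gfun :: "nat \<Rightarrow> nat \<Rightarrow> step list \<Rightarrow> int \<Rightarrow> nat" where
  "gfun a b w \<beta> = card ({\<beta>..\<beta> + int a - 1} \<inter> Deltac a b w)"

definition G :: "nat \<Rightarrow> nat \<Rightarrow> nat list \<Rightarrow> nat list" where
  "G a b cs = map (gfun a b (word a cs)) (sort (gens a b (word a cs)))"

definition levels :: "nat \<Rightarrow> nat \<Rightarrow> step list \<Rightarrow> int list" where
  "levels a b w = map (\<lambda>i. lvl a b (fst (pt w (Suc i))) (snd (pt w (Suc i)))) [0..<length w]"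

text \<open>sw^+_{b,-a}: levels 0,-1,-2,... then ...,2,1. Only levels in [-M,M] with
  M=(a+b)*length w can occur, so the infinite enumeration is truncated there.\<close>
definition sw :: "nat \<Rightarrow> nat \<Rightarrow> step list \<Rightarrow> step list" where
  "sw a b w = (let M = int ((a + b) * length w); l = levels a b w in
     concat (map (\<lambda>k. map (\<lambda>i. w ! i) (filter (\<lambda>i. l ! i = k) [0..<length w]))
       (rev [-M..0] @ rev [1..M])))"

end

theory Submission
  imports Defs
begin

text \<open>Let \<open>S\<close> and \<open>T\<close> be the levels at which the north and the east steps of the frontier
  path start. Coprimality makes all \<open>a + b\<close> levels along the path distinct, and \<open>S\<close> is a
  complete residue system modulo \<open>a\<close>. The generator of the east step starting at level \<open>t\<close>
  is \<open>t - a\<close>, and \<open>\<Delta>\<^sup>c\<close> consists of the nonnegative levels lying a positive multiple of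
  \<open>a\<close> below some \<open>s \<in> S\<close>; so the window of length \<open>a\<close> below \<open>t\<close> meets \<open>\<Delta>\<^sup>c\<close> once for
  each \<open>s \<in> S\<close> above \<open>t\<close>, and the column of \<open>G(\<pi>)\<close> belonging to \<open>t\<close> has length
  \<open>a - #{s \<in> S. s < t}\<close>. On the other side, the levels of the reversed word are the
  negated levels of the word, so \<open>sw\<^sup>+\<close> lists the steps in increasing order of their
  starting levels; in that word the east step of level \<open>t\<close> is preceded by exactly
  \<open>#{s \<in> S. s < t}\<close> north steps, which makes it the frontier word of the same partition.\<close>

lemma count_list_take_Suc:
  "j < length w \<Longrightarrow>
     count_list (take (Suc j) w) c = count_list (take j w) c + (if w ! j = c then 1 else 0)"
  by (simp add: take_Suc_conv_app_nth)

lemma count_list_take_le: "count_list (take j w) c \<le> count_list w c"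
  by (metis append_take_drop_id count_list_append le_add1)

lemma count_list_take_mono: "j \<le> j' \<Longrightarrow> count_list (take j w) c \<le> count_list (take j' w) c"
  by (metis count_list_append le_add1 le_add_diff_inverse take_add)

lemma count_list_take_crossing:
  assumes "j1 \<le> j2" "j2 \<le> length w"
    and "count_list (take j1 w) c \<le> x" "x < count_list (take j2 w) c"
  shows "\<exists>j. j1 \<le> j \<and> j < j2 \<and> w ! j = c \<and> count_list (take j w) c = x"
  using assms
proof (induction j2)
  case 0
  then show ?case by simp
next
  case (Suc j2)
  have step: "count_list (take (Suc j2) w) c = count_list (take j2 w) c + (if w ! j2 = c then 1 else 0)"
    using Suc.prems count_list_take_Suc[of j2 w c] by simp
  show ?case
  proof (cases "x < count_list (take j2 w) c")
    case True
    then have "j1 \<le> j2"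
      using Suc.prems count_list_take_mono[of j2 j1 w c] by (cases "j1 = Suc j2") auto
    then show ?thesis using Suc True by (metis less_SucI Suc_leD)
  next
    case False
    then have "w ! j2 = c" "x = count_list (take j2 w) c"
      using step Suc.prems(4) by (auto split: if_splits)
    moreover have "j1 \<le> j2"
      using Suc.prems False \<open>x = _\<close> by (cases "j1 = Suc j2") auto
    ultimately show ?thesis by auto
  qed
qed

lemma distinct_set_eq_singleton: "distinct xs \<Longrightarrow> set xs = {x} \<Longrightarrow> xs = [x]"
  by (metis distinct.simps(2) empty_iff empty_set list.set_intros(1,2) neq_Nil_conv singleton_iff)

lemma sorted_list_of_set_strict_sorted: "sorted_wrt (<) xs \<Longrightarrow> sorted_list_of_set (set xs) = xs"
  by (simp add: sorted_list_of_set.idem_if_sorted_distinct strict_sorted_iff)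

lemma filter_mem_upto:
  "K \<subseteq> {m..n} \<Longrightarrow> filter (\<lambda>k. k \<in> K) [m..n] = sorted_list_of_set K"
  by (metis sorted_list_of_set_strict_sorted sorted_wrt_filter sorted_wrt_upto
      inf.absorb_iff2 set_filter set_upto Int_def)

lemma rev_sorted_list_of_set_uminus:
  fixes A :: "'a::linordered_ab_group_add set"
  assumes "finite A"
  shows "rev (sorted_list_of_set (uminus ` A)) = map uminus (sorted_list_of_set A)"
proof -
  have "sorted_wrt (<) (rev (map uminus (sorted_list_of_set A)))"
    by (simp add: sorted_wrt_rev sorted_wrt_map)
  then have "sorted_list_of_set (uminus ` A) = rev (map uminus (sorted_list_of_set A))"
    using sorted_list_of_set_strict_sorted assms by fastforce
  then show ?thesis by simp
qed

lemma concat_map_filter_key: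
  assumes "distinct is" "inj_on key (set is)" "\<And>i. i \<in> set is \<Longrightarrow> g (key i) = f i"
  shows "concat (map (\<lambda>k. map f (filter (\<lambda>i. key i = k) is)) ks) =
         map g (filter (\<lambda>k. k \<in> key ` set is) ks)"
proof -
  have "map f (filter (\<lambda>i. key i = k) is) = (if k \<in> key ` set is then [g k] else [])" for k
  proof (cases "k \<in> key ` set is")
    case True
    then obtain i0 where i0: "i0 \<in> set is" "k = key i0" by auto
    have "set (filter (\<lambda>i. key i = k) is) = {i0}"
      using i0 assms(2) by (auto simp: inj_on_def)
    then have "filter (\<lambda>i. key i = k) is = [i0]"
      using assms(1) by (simp add: distinct_set_eq_singleton)
    then show ?thesis using True i0 assms(3) by simp
  qed (auto simp: filter_empty_conv)
  then show ?thesis by (induction ks) simp_all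
qed

lemma count_list_N_plus_E: "count_list u N + count_list u E = length u"
  by (induction u rule: eheights.induct) auto

lemma length_eheights: "length (eheights w) = count_list w E"
  by (induction w rule: eheights.induct) auto

lemma eheights_le_count_N: "k \<in> set (eheights w) \<Longrightarrow> k \<le> count_list w N"
  by (induction w arbitrary: k rule: eheights.induct) auto

lemma eheights_map_sorted:
  fixes V :: "'a::linorder list"
  assumes "sorted_wrt (<) V"
  shows "eheights (map f V) =
    map (\<lambda>t. card {v\<in>set V. v < t \<and> f v = N}) (filter (\<lambda>v. f v = E) V)"
  using assms
proof (induction V)
  case Nil
  then show ?case by simp
next
  case (Cons v V)
  then have greater: "\<forall>u\<in>set V. v < u" and IH: "eheights (map f V) =
      map (\<lambda>t. card {v\<in>set V. v < t \<and> f v = N}) (filter (\<lambda>v. f v = E) V)"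
    by auto
  have fresh: "v \<notin> set V" using greater by (meson less_irrefl)
  show ?case
  proof (cases "f v")
    case N
    have "card {u\<in>set (v # V). u < t \<and> f u = N} = Suc (card {u\<in>set V. u < t \<and> f u = N})"
      if "t \<in> set V" for t
    proof -
      have "{u\<in>set (v # V). u < t \<and> f u = N} = insert v {u\<in>set V. u < t \<and> f u = N}"
        using N greater that by auto
      then show ?thesis using fresh by simp
    qed
    then show ?thesis using N IH by (simp cong: map_cong)
  next
    case E
    have "{u\<in>set (v # V). u < t \<and> f u = N} = {u\<in>set V. u < t \<and> f u = N}" for t
      using E by auto
    moreover have "{u\<in>set V. u < v \<and> f u = N} = {}" using greater by auto
    ultimately show ?thesis using E IH fresh by simp
  qed
qed

lemma east_step_of_eheights:
  "x < length (eheights w) \<Longrightarrow>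
     \<exists>j<length w. w ! j = E \<and> count_list (take j w) E = x \<and> count_list (take j w) N = eheights w ! x"
proof (induction w arbitrary: x rule: eheights.induct)
  case 1
  then show ?case by simp
next
  case (2 w)
  then obtain j where "j < length w" "w ! j = E" "count_list (take j w) E = x"
      "count_list (take j w) N = eheights w ! x"
    by auto
  then show ?case using "2.prems" by (intro exI[of _ "Suc j"]) auto
next
  case (3 w)
  show ?case
  proof (cases x)
    case 0
    then show ?thesis by (intro exI[of _ 0]) auto
  next
    case (Suc x')
    then obtain j where "j < length w" "w ! j = E" "count_list (take j w) E = x'"
        "count_list (take j w) N = eheights w ! x'"
      using 3 by auto
    then show ?thesis using Suc by (intro exI[of _ "Suc j"]) auto
  qed
qed

lemma eheights_at_east_step:
  "j < length w \<Longrightarrow> w ! j = E \<Longrightarrow>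
     count_list (take j w) E < length (eheights w) \<and>
     eheights w ! count_list (take j w) E = count_list (take j w) N"
proof (induction w arbitrary: j rule: eheights.induct)
  case 1
  then show ?case by simp
next
  case (2 w)
  then show ?case by (cases j) auto
next
  case (3 w)
  then show ?case by (cases j) auto
qed

lemma word_aux_Cons_N:
  assumes "h < A" and "cs \<noteq> [] \<Longrightarrow> h < A - hd cs"
  shows "word_aux A h cs = N # word_aux A (Suc h) cs"
proof (cases cs)
  case Nil
  then show ?thesis using assms by (metis Suc_diff_Suc replicate_Suc word_aux.simps(1))
next
  case (Cons c cs')
  then have "A - c - h = Suc (A - c - Suc h)" using assms by simp
  then show ?thesis using Cons by simp
qed

lemma word_aux_eheights:
  "count_list u N + h = A \<Longrightarrow> word_aux A h (map (\<lambda>k. A - (k + h)) (eheights u)) = u"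
proof (induction u arbitrary: h rule: eheights.induct)
  case 1
  then show ?case by simp
next
  case (2 u)
  let ?cs = "map (\<lambda>k. A - (k + Suc h)) (eheights u)"
  have "h < A - hd ?cs" if "?cs \<noteq> []"
  proof -
    obtain k ks where "eheights u = k # ks" using \<open>?cs \<noteq> []\<close> by (cases "eheights u") auto
    moreover from this have "k \<le> count_list u N" using eheights_le_count_N[of k u] by simp
    ultimately show ?thesis using "2.prems" by simp
  qed
  then have "word_aux A h ?cs = N # word_aux A (Suc h) ?cs"
    using "2.prems" by (intro word_aux_Cons_N) auto
  then show ?case using "2.IH"[of "Suc h"] "2.prems" by (simp add: o_def)
next
  case (3 u)
  then show ?case by simp
qed

lemma word_eheights: "word (count_list u N) (map (\<lambda>k. count_list u N - k) (eheights u)) = u"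
  using word_aux_eheights[of u 0 "count_list u N"] by (simp add: word_def)

lemma count_list_replicate_self: "count_list (replicate n x) x = n"
  by (induction n) auto

lemma count_E_word_aux: "count_list (word_aux a h cs) E = length cs"
  by (induction cs arbitrary: h) auto

lemma count_N_word_aux:
  "\<forall>c\<in>set cs. c \<le> a \<and> h \<le> a - c \<Longrightarrow> sorted (rev cs) \<Longrightarrow> h \<le> a \<Longrightarrow>
     count_list (word_aux a h cs) N = a - h"
proof (induction cs arbitrary: h)
  case Nil
  then show ?case by (simp add: count_list_replicate_self)
next
  case (Cons c cs)
  have "sorted (rev cs)" "\<forall>x\<in>set cs. x \<le> c" using Cons.prems(2) by (auto simp: sorted_append)
  then have "count_list (word_aux a (a - c) cs) N = a - (a - c)"
    using Cons.IH[of "a - c"] Cons.prems(1) by (auto intro: diff_le_mono2)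
  then show ?case using Cons.prems by (auto simp: count_list_replicate_self)
qed

lemma count_list_word:
  assumes "is_partition_in_box a b cs"
  shows "count_list (word a cs) N = a" and "count_list (word a cs) E = b"
  using assms count_N_word_aux[of cs a 0]
  by (simp_all add: word_def count_E_word_aux is_partition_in_box_def)

locale coprime_dyck_word =
  fixes a b :: nat and w :: "step list"
  assumes a_pos: "0 < a" and b_pos: "0 < b" and coprime_ab: "coprime a b"
    and count_N: "count_list w N = a" and count_E: "count_list w E = b"
    and weakly_above: "\<And>k. k \<le> length w \<Longrightarrow> 0 \<le> lvl a b (fst (pt w k)) (snd (pt w k))"
begin

definition x_at :: "nat \<Rightarrow> int" where "x_at j = int (count_list (take j w) E)"
definition y_at :: "nat \<Rightarrow> int" where "y_at j = int (count_list (take j w) N)"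
definition level_at :: "nat \<Rightarrow> int" where "level_at j = lvl a b (x_at j) (y_at j)"

lemma level_at_eq: "level_at j = int b * y_at j - int a * x_at j"
  by (simp add: level_at_def lvl_def)

lemma length_w: "length w = a + b"
  using count_list_N_plus_E[of w] count_N count_E by simp

lemma level_at_nonneg: "j \<le> length w \<Longrightarrow> 0 \<le> level_at j"
  using weakly_above by (simp add: level_at_def pt_def x_at_def y_at_def)

lemma x_at_nonneg: "0 \<le> x_at j" and y_at_nonneg: "0 \<le> y_at j"
  by (simp_all add: x_at_def y_at_def)

lemma y_at_le: "y_at j \<le> int a"
  using count_list_take_le[of j w N] count_N by (simp add: y_at_def)

lemma x_at_mono: "j \<le> j' \<Longrightarrow> x_at j \<le> x_at j'" and y_at_mono: "j \<le> j' \<Longrightarrow> y_at j \<le> y_at j'"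
  by (simp_all add: x_at_def y_at_def count_list_take_mono)

lemma x_at_Suc: "j < length w \<Longrightarrow> x_at (Suc j) = x_at j + (if w ! j = E then 1 else 0)"
  and y_at_Suc: "j < length w \<Longrightarrow> y_at (Suc j) = y_at j + (if w ! j = N then 1 else 0)"
  by (simp_all add: x_at_def y_at_def count_list_take_Suc)

lemma x_at_plus_y_at: "j \<le> length w \<Longrightarrow> x_at j + y_at j = int j"
  using count_list_N_plus_E[of "take j w"] by (simp add: x_at_def y_at_def)

text \<open>By coprimality, a lattice displacement \<open>(dx, dy)\<close> with \<open>0 \<le> dy \<le> a\<close> along the line
  of slope \<open>a/b\<close> is \<open>(0, 0)\<close> or \<open>(b, a)\<close>; both are excluded strictly inside one period.\<close>
lemma level_at_neq:
  assumes "j < j'" and "j' < length w"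
  shows "level_at j \<noteq> level_at j'"
proof
  assume eq: "level_at j = level_at j'"
  define dx dy where "dx = x_at j' - x_at j" and "dy = y_at j' - y_at j"
  have sum: "dx + dy = int j' - int j"
    using x_at_plus_y_at[of j] x_at_plus_y_at[of j'] assms by (simp add: dx_def dy_def)
  have slope: "int b * dy = int a * dx"
    using eq by (simp add: level_at_eq dx_def dy_def algebra_simps)
  then have "int a dvd int b * dy" by simp
  then have "int a dvd dy"
    using coprime_ab by (simp add: coprime_dvd_mult_right_iff)
  then obtain k where k: "dy = int a * k" ..
  have "0 \<le> dy" "dy \<le> int a"
    using assms y_at_mono[of j j'] y_at_le[of j'] y_at_nonneg[of j] by (simp_all add: dy_def)
  then have "0 \<le> k" "k \<le> 1"
    using k a_pos by (simp_all add: zero_le_mult_iff mult_le_cancel_left1)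
  then have "k = 0 \<or> k = 1" by linarith
  then show False
  proof
    assume "k = 0"
    then have "dx = 0" using slope k a_pos by simp
    then show False using sum k \<open>k = 0\<close> assms by simp
  next
    assume "k = 1"
    then have "dx = int b" using slope k a_pos by (simp add: mult.commute)
    then show False using sum k \<open>k = 1\<close> assms length_w by simp
  qed
qed

lemma inj_on_level_at: "inj_on level_at {..<length w}"
  by (metis inj_onI lessThan_iff level_at_neq linorder_neqE_nat)

definition north_levels :: "int set" where
  "north_levels = level_at ` {j. j < length w \<and> w ! j = N}"

definition east_levels :: "int set" where
  "east_levels = level_at ` {j. j < length w \<and> w ! j = E}"

lemma finite_north_levels: "finite north_levels" and finite_east_levels: "finite east_levels"
  by (simp_all add: north_levels_def east_levels_def)

lemma card_step_levels: "card (level_at ` {j. j < length w \<and> w ! j = c}) = count_list w c"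
proof -
  have "inj_on level_at {j. j < length w \<and> w ! j = c}"
    using inj_on_level_at by (rule inj_on_subset) auto
  then show ?thesis
    by (simp add: card_image count_list_eq_length_filter length_filter_conv_card eq_commute)
qed

lemma card_north_levels: "card north_levels = a" and card_east_levels: "card east_levels = b"
  using card_step_levels[of N] card_step_levels[of E] count_N count_E
  by (simp_all add: north_levels_def east_levels_def)

lemma levels_eq_north_Un_east: "level_at ` {..<length w} = north_levels \<union> east_levels"
proof -
  have "{..<length w} = {j. j < length w \<and> w ! j = N} \<union> {j. j < length w \<and> w ! j = E}"
    using step.exhaust by auto
  then show ?thesis by (simp add: north_levels_def east_levels_def image_Un)
qed

lemma north_east_levels_disjoint: "north_levels \<inter> east_levels = {}"
  using inj_on_level_at unfolding north_levels_def east_levels_def inj_on_def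
  by (smt (verit) disjoint_iff imageE lessThan_iff mem_Collect_eq step.distinct(1))

lemma y_at_north_step_less:
  assumes "j < j'" "j' \<le> length w" "w ! j = N"
  shows "y_at j < y_at j'"
  using y_at_Suc[of j] y_at_mono[of "Suc j" j'] assms by simp

lemma north_levels_cong_eq:
  assumes "s \<in> north_levels" "s' \<in> north_levels" "int a dvd s - s'"
  shows "s = s'"
proof -
  obtain j j' where j: "j < length w" "w ! j = N" "s = level_at j"
    and j': "j' < length w" "w ! j' = N" "s' = level_at j'"
    using assms(1,2) by (auto simp: north_levels_def)
  have "int b * (y_at j - y_at j') = (s - s') + int a * (x_at j - x_at j')"
    using j j' by (simp add: level_at_eq algebra_simps)
  then have "int a dvd int b * (y_at j - y_at j')" using assms(3) by simp
  then have dvd: "int a dvd y_at j - y_at j'"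
    using coprime_ab by (simp add: coprime_dvd_mult_right_iff)
  have "y_at j < int a" "y_at j' < int a"
    using y_at_Suc[of j] y_at_Suc[of j'] y_at_le[of "Suc j"] y_at_le[of "Suc j'"] j j' by simp_all
  then have "\<bar>y_at j - y_at j'\<bar> < int a" using y_at_nonneg[of j] y_at_nonneg[of j'] by linarith
  then have "y_at j = y_at j'" using dvd dvd_imp_le_int[of "y_at j - y_at j'" "int a"] by force
  then have "j = j'"
    using y_at_north_step_less[of j j'] y_at_north_step_less[of j' j] j j'
    by (cases j j' rule: linorder_cases) auto
  then show ?thesis using j j' by simp
qed

lemma east_level_ge: "t \<in> east_levels \<Longrightarrow> int a \<le> t"
proof -
  assume "t \<in> east_levels"
  then obtain j where j: "j < length w" "w ! j = E" "t = level_at j" by (auto simp: east_levels_def)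
  then have "level_at (Suc j) = t - int a"
    using x_at_Suc[of j] y_at_Suc[of j] by (simp add: level_at_eq algebra_simps)
  then show ?thesis using level_at_nonneg[of "Suc j"] j by simp
qed

text \<open>The square of column \<open>x + 1\<close> and row \<open>y\<close> lies \<open>a (x + 1 - x')\<close> below the start of the
  north step at height \<open>y\<close>, whose abscissa \<open>x'\<close> is at most \<open>x\<close> when the square is below the
  path.\<close>
lemma Deltac_imp_below_north_level:
  assumes "l \<in> Deltac a b w"
  shows "\<exists>s\<in>north_levels. int a dvd s - l \<and> l + int a \<le> s"
proof -
  obtain x y where xy: "l = lvl a b (int x + 1) y" "x < length (eheights w)" "0 \<le> y"
      "y < int (eheights w ! x)"
    using assms unfolding Deltac_def by blast
  obtain j where j: "j < length w" "w ! j = E" "x_at j = int x" "y_at j = int (eheights w ! x)"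
    using east_step_of_eheights[OF xy(2)] by (auto simp: x_at_def y_at_def)
  obtain y' where y': "y = int y'" using xy(3) nonneg_int_cases by blast
  have "y' < count_list (take j w) N" using xy(4) j(4) y' by (simp add: y_at_def)
  then obtain j' where j': "j' < j" "w ! j' = N" "count_list (take j' w) N = y'"
    using count_list_take_crossing[of 0 j w N y'] j(1) by auto
  define s where "s = level_at j'"
  have "s \<in> north_levels" using j' j(1) by (auto simp: north_levels_def s_def)
  have "s - l = int a * (x_at j + 1 - x_at j')"
    using xy(1) j y' j'(3) by (simp add: s_def level_at_eq lvl_def y_at_def algebra_simps)
  moreover have "int a * 1 \<le> int a * (x_at j + 1 - x_at j')"
    using j'(1) x_at_mono[of j' j] by (intro mult_left_mono) auto
  ultimately have "int a dvd s - l" "l + int a \<le> s" by simp_all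
  with \<open>s \<in> north_levels\<close> show ?thesis by blast
qed

lemma below_north_level_imp_Deltac:
  assumes "0 \<le> l" "s \<in> north_levels" "int a dvd s - l" "l + int a \<le> s"
  shows "l \<in> Deltac a b w"
proof -
  obtain j' where j': "j' < length w" "w ! j' = N" "s = level_at j'"
    using assms(2) by (auto simp: north_levels_def)
  obtain k where k: "s - l = int a * k" using assms(3) by (rule dvdE)
  have "int a * 1 \<le> int a * k" using k assms(4) by simp
  then have "1 \<le> k" using a_pos by simp
  define x where "x = x_at j' + k - 1"
  have l_eq: "l = int b * y_at j' - int a * (x + 1)"
    using k j'(3) by (simp add: x_def level_at_eq algebra_simps)
  have "y_at j' + 1 \<le> int a" using y_at_Suc[OF j'(1)] y_at_le[of "Suc j'"] j'(2) by simp
  then have "int b * y_at j' + int b \<le> int a * int b"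
    using mult_left_mono[of "y_at j' + 1" "int a" "int b"] by (simp add: algebra_simps)
  then have "int a * (x + 1) < int a * int b" using l_eq assms(1) b_pos by linarith
  then have x_less: "x + 1 < int b" using a_pos by simp
  have "x_at (Suc j') \<le> x" using x_at_Suc[OF j'(1)] j'(2) \<open>1 \<le> k\<close> by (simp add: x_def)
  moreover have "0 \<le> x_at (Suc j')" by (rule x_at_nonneg)
  ultimately obtain xn where xn: "x = int xn" "count_list (take (Suc j') w) E \<le> xn"
    by (metis nonneg_int_cases order_trans x_at_def of_nat_le_iff)
  moreover have "xn < count_list (take (length w) w) E" using x_less xn count_E by simp
  ultimately obtain j where j: "Suc j' \<le> j" "j < length w" "w ! j = E" "count_list (take j w) E = xn"
    using count_list_take_crossing[of "Suc j'" "length w" w E xn] j'(1) by auto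
  have eh: "xn < length (eheights w)" "eheights w ! xn = count_list (take j w) N"
    using eheights_at_east_step[OF j(2,3)] j(4) by auto
  have "y_at j' < int (eheights w ! xn)"
    using eh(2) y_at_Suc[OF j'(1)] j'(2) y_at_mono[OF j(1)] by (simp add: y_at_def)
  moreover have "l = lvl a b (int xn + 1) (y_at j')" using l_eq xn by (simp add: lvl_def)
  ultimately show ?thesis
    unfolding Deltac_def using eh(1) assms(1) y_at_nonneg[of j'] by blast
qed

text \<open>Reducing modulo \<open>a\<close> into the window \<open>[t - a, t)\<close> maps the north levels above \<open>t\<close>
  bijectively onto the window's part of \<open>Deltac\<close>.\<close>
lemma gfun_east_level:
  assumes "t \<in> east_levels"
  shows "gfun a b w (t - int a) = card {s\<in>north_levels. t \<le> s}"
proof -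
  define \<beta> where "\<beta> = t - int a"
  define reduce where "reduce s = \<beta> + (s - \<beta>) mod int a" for s
  let ?A = "{s\<in>north_levels. t \<le> s}"
  let ?W = "{\<beta>..\<beta> + int a - 1} \<inter> Deltac a b w"
  have a_pos': "0 < int a" using a_pos by simp
  have "inj_on reduce ?A"
  proof (rule inj_onI)
    fix s s' assume "s \<in> ?A" "s' \<in> ?A" "reduce s = reduce s'"
    then have "int a dvd (s - \<beta>) - (s' - \<beta>)" by (simp add: reduce_def mod_eq_dvd_iff)
    then show "s = s'" using north_levels_cong_eq \<open>s \<in> ?A\<close> \<open>s' \<in> ?A\<close> by simp
  qed
  moreover have "reduce ` ?A = ?W"
  proof
    show "reduce ` ?A \<subseteq> ?W"
    proof
      fix l assume "l \<in> reduce ` ?A"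
      then obtain s where s: "s \<in> north_levels" "t \<le> s" "l = reduce s" by auto
      have "s \<noteq> t" using assms s(1) north_east_levels_disjoint by auto
      have window: "l \<in> {\<beta>..\<beta> + int a - 1}" using s(3) a_pos' by (simp add: reduce_def)
      have "s - l = (s - \<beta>) - (s - \<beta>) mod int a" using s(3) by (simp add: reduce_def)
      also have "\<dots> = int a * ((s - \<beta>) div int a)" by (rule minus_mod_eq_mult_div)
      finally have dvd: "int a dvd s - l" by simp
      have "0 < s - l" using s \<open>s \<noteq> t\<close> window by (auto simp: \<beta>_def)
      then have "int a \<le> s - l" using dvd zdvd_imp_le by blast
      moreover have "0 \<le> l" using window east_level_ge[OF assms] by (simp add: \<beta>_def)
      ultimately have "l \<in> Deltac a b w" using below_north_level_imp_Deltac s(1) dvd by simp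
      then show "l \<in> ?W" using window by simp
    qed
    show "?W \<subseteq> reduce ` ?A"
    proof
      fix l assume l: "l \<in> ?W"
      then obtain s where s: "s \<in> north_levels" "int a dvd s - l" "l + int a \<le> s"
        using Deltac_imp_below_north_level by blast
      have "(s - \<beta>) mod int a = (l - \<beta>) mod int a"
        using s(2) by (metis mod_eq_dvd_iff diff_diff_eq2 diff_add_cancel)
      also have "\<dots> = l - \<beta>" using l by (intro mod_pos_pos_trivial) auto
      finally have "reduce s = l" by (simp add: reduce_def)
      moreover have "t \<le> s" using s(3) l by (auto simp: \<beta>_def)
      ultimately show "l \<in> reduce ` ?A" using s(1) by auto
    qed
  qed
  ultimately have "card ?W = card ?A" by (metis card_image)
  then show ?thesis by (simp add: gfun_def \<beta>_def)
qed

lemma set_gens: "set (gens a b w) = (\<lambda>t. t - int a) ` east_levels"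
proof -
  have "set (gens a b w) = (\<lambda>j. level_at j - int a) ` {j. j < length w \<and> w ! j = E}"
  proof (intro equalityI subsetI)
    fix g assume "g \<in> set (gens a b w)"
    then obtain x where x: "x < length (eheights w)" "g = lvl a b (int x + 1) (int (eheights w ! x))"
      by (auto simp: gens_def)
    then obtain j where j: "j < length w" "w ! j = E" "x_at j = int x"
        "y_at j = int (eheights w ! x)"
      using east_step_of_eheights[OF x(1)] by (auto simp: x_at_def y_at_def)
    then have "g = level_at j - int a" using x(2) by (simp add: level_at_eq lvl_def algebra_simps)
    then show "g \<in> (\<lambda>j. level_at j - int a) ` {j. j < length w \<and> w ! j = E}"
      using j(1,2) by blast
  next
    fix g assume "g \<in> (\<lambda>j. level_at j - int a) ` {j. j < length w \<and> w ! j = E}"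
    then obtain j where j: "j < length w" "w ! j = E" "g = level_at j - int a" by auto
    let ?x = "count_list (take j w) E"
    have "?x < length (eheights w)" "eheights w ! ?x = count_list (take j w) N"
      using eheights_at_east_step[OF j(1,2)] by auto
    moreover have "g = lvl a b (int ?x + 1) (int (eheights w ! ?x))"
      using j calculation(2) by (simp add: level_at_eq lvl_def x_at_def y_at_def algebra_simps)
    ultimately show "g \<in> set (gens a b w)"
      unfolding gens_def set_map set_upt by (intro image_eqI[of _ _ ?x]) auto
  qed
  then show ?thesis by (auto simp: east_levels_def)
qed

lemma sort_gens: "sort (gens a b w) = map (\<lambda>t. t - int a) (sorted_list_of_set east_levels)"
proof -
  have "card (set (gens a b w)) = length (gens a b w)"
    using set_gens card_east_levels length_eheights[of w] count_E
    by (simp add: gens_def card_image inj_on_def)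
  then have "sort (gens a b w) = sorted_list_of_set (set (gens a b w))"
    by (simp add: card_distinct sorted_list_of_set_sort_remdups distinct_remdups_id)
  also have "\<dots> = map (\<lambda>t. t - int a) (sorted_list_of_set east_levels)"
  proof -
    have "sorted_wrt (<) (map (\<lambda>t. t - int a) (sorted_list_of_set east_levels))"
      by (simp add: sorted_wrt_map)
    then show ?thesis
      using sorted_list_of_set_strict_sorted set_gens finite_east_levels by fastforce
  qed
  finally show ?thesis .
qed

definition step_of_level :: "int \<Rightarrow> step" where
  "step_of_level v = (if v \<in> north_levels then N else E)"

lemma step_of_level_at: "j < length w \<Longrightarrow> step_of_level (level_at j) = w ! j"
  using north_east_levels_disjoint
  by (cases "w ! j") (auto simp: step_of_level_def north_levels_def east_levels_def)

lemma nth_levels_rev: "i < length w \<Longrightarrow> levels a b (rev w) ! i = - level_at (length w - Suc i)"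
proof -
  assume i: "i < length w"
  let ?k = "length w - Suc i"
  have "take (Suc i) (rev w) = rev (drop ?k w)" by (simp add: take_rev)
  moreover have "count_list (drop ?k w) c = count_list w c - count_list (take ?k w) c" for c
    using count_list_append[of "take ?k w" "drop ?k w" c] by simp
  ultimately have "levels a b (rev w) ! i = lvl a b (int b - x_at ?k) (int a - y_at ?k)"
    using i count_list_take_le[of ?k w E] count_list_take_le[of ?k w N] count_N count_E
    by (simp add: levels_def pt_def x_at_def y_at_def)
  then show ?thesis by (simp add: level_at_eq lvl_def algebra_simps)
qed

lemma level_at_range_subset: "level_at ` {..<length w} \<subseteq> {0..int ((a + b) * length w)}"
proof
  fix v assume "v \<in> level_at ` {..<length w}"
  then obtain j where j: "j < length w" "v = level_at j" by auto
  have "int b * y_at j \<le> int b * int a" using y_at_le[of j] by (simp add: mult_left_mono)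
  moreover have "0 \<le> int a * x_at j" using x_at_nonneg[of j] by simp
  moreover have "int b * int a \<le> int ((a + b) * length w)"
    unfolding length_w of_nat_mult by (intro mult_mono) auto
  ultimately show "v \<in> {0..int ((a + b) * length w)}"
    using j level_at_nonneg[of j] by (simp add: level_at_eq)
qed

abbreviation sorted_levels :: "int list" where
  "sorted_levels \<equiv> sorted_list_of_set (level_at ` {..<length w})"

text \<open>The levels of \<open>rev w\<close> are the negated levels of \<open>w\<close>, all nonpositive, so \<open>sw\<close> reads
  the steps of \<open>w\<close> in increasing order of their starting levels.\<close>
lemma sw_rev: "sw a b (rev w) = map step_of_level sorted_levels"
proof -
  define n where "n = length w"
  define M where "M = int ((a + b) * n)"
  define key where "key i = levels a b (rev w) ! i" for i
  define K where "K = uminus ` level_at ` {..<n}"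
  have key: "key i = - level_at (n - Suc i)" if "i < n" for i
    using nth_levels_rev that by (simp add: key_def n_def)
  have inj_key: "inj_on key (set [0..<n])"
  proof (rule inj_onI)
    fix i i' assume i: "i \<in> set [0..<n]" and i': "i' \<in> set [0..<n]" and "key i = key i'"
    then have "level_at (n - Suc i) = level_at (n - Suc i')" using key by simp
    then have "n - Suc i = n - Suc i'" by (rule inj_onD[OF inj_on_level_at]) (use i i' in \<open>auto simp: n_def\<close>)
    then show "i = i'" using i i' by simp
  qed
  have step_key: "step_of_level (- key i) = rev w ! i" if "i \<in> set [0..<n]" for i
    using that key step_of_level_at by (simp add: rev_nth n_def)
  have "sw a b (rev w) =
      map (\<lambda>k. step_of_level (- k)) (filter (\<lambda>k. k \<in> key ` set [0..<n]) (rev [-M..0] @ rev [1..M]))"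
    unfolding sw_def Let_def length_rev key_def [symmetric] M_def n_def
    by (rule concat_map_filter_key[where g = "\<lambda>k. step_of_level (- k)"])
      (use inj_key step_key in \<open>simp_all add: n_def\<close>)
  also have "key ` set [0..<n] = K"
  proof (intro equalityI subsetI)
    fix k assume "k \<in> key ` set [0..<n]"
    then show "k \<in> K" using key by (auto simp: K_def)
  next
    fix k assume "k \<in> K"
    then obtain j where j: "j < n" "k = - level_at j" by (auto simp: K_def)
    then have "key (n - Suc j) = k" using key[of "n - Suc j"] by (simp add: Suc_diff_Suc)
    then show "k \<in> key ` set [0..<n]" using j(1) by (intro image_eqI[of _ _ "n - Suc j"]) auto
  qed
  also have "filter (\<lambda>k. k \<in> K) (rev [-M..0] @ rev [1..M]) = rev (sorted_list_of_set K)"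
  proof -
    have "K \<subseteq> {-M..0}" using level_at_range_subset by (auto simp: K_def M_def n_def)
    then show ?thesis by (auto simp: rev_filter [symmetric] filter_mem_upto filter_empty_conv)
  qed
  also have "rev (sorted_list_of_set K) = map uminus (sorted_list_of_set (level_at ` {..<n}))"
    by (simp add: K_def rev_sorted_list_of_set_uminus)
  finally show ?thesis by (simp add: n_def o_def)
qed

lemma filter_sorted_levels:
  "filter (\<lambda>v. step_of_level v = c) sorted_levels =
     sorted_list_of_set (level_at ` {j. j < length w \<and> w ! j = c})"
proof -
  have "set (filter (\<lambda>v. step_of_level v = c) sorted_levels) =
      level_at ` {j. j < length w \<and> w ! j = c}"
    using step_of_level_at by auto
  then show ?thesis
    using sorted_list_of_set_strict_sorted sorted_wrt_filter strict_sorted_list_of_set by metis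
qed

lemma eheights_sorted_levels:
  "eheights (map step_of_level sorted_levels) =
     map (\<lambda>t. card {s\<in>north_levels. s < t}) (sorted_list_of_set east_levels)"
proof -
  have "{v\<in>level_at ` {..<length w}. v < t \<and> step_of_level v = N} = {s\<in>north_levels. s < t}" for t
    using levels_eq_north_Un_east north_east_levels_disjoint by (auto simp: step_of_level_def)
  then show ?thesis
    using eheights_map_sorted[of sorted_levels step_of_level] filter_sorted_levels[of E]
    by (simp add: east_levels_def)
qed

lemma count_N_sorted_levels: "count_list (map step_of_level sorted_levels) N = a"
proof -
  have "count_list (map step_of_level sorted_levels) N =
      length (filter (\<lambda>v. step_of_level v = N) sorted_levels)"
    by (simp add: count_list_eq_length_filter filter_map o_def eq_commute)
  also have "\<dots> = card north_levels"
    by (simp add: filter_sorted_levels north_levels_def)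
  finally show ?thesis using card_north_levels by simp
qed

lemma map_gfun_sort_gens:
  "map (gfun a b w) (sort (gens a b w)) =
     map (\<lambda>t. a - card {s\<in>north_levels. s < t}) (sorted_list_of_set east_levels)"
proof -
  have "gfun a b w (t - int a) = a - card {s\<in>north_levels. s < t}" if "t \<in> east_levels" for t
  proof -
    have "north_levels = {s\<in>north_levels. s < t} \<union> {s\<in>north_levels. t \<le> s}" by auto
    then have "card north_levels = card {s\<in>north_levels. s < t} + card {s\<in>north_levels. t \<le> s}"
      using finite_north_levels
      by (metis (no_types, lifting) card_Un_disjoint disjoint_iff finite_Un mem_Collect_eq not_le)
    then show ?thesis using gfun_east_level[OF that] card_north_levels by simp
  qed
  then show ?thesis using finite_east_levels by (simp add: sort_gens)
qed

lemma word_sorted_levels: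
  "word a (map (\<lambda>t. a - card {s\<in>north_levels. s < t}) (sorted_list_of_set east_levels)) =
     map step_of_level sorted_levels"
  using word_eheights[of "map step_of_level sorted_levels"]
  by (simp add: count_N_sorted_levels eheights_sorted_levels o_def)

lemma word_G_eq_sw_rev: "word a (map (gfun a b w) (sort (gens a b w))) = sw a b (rev w)"
  by (simp add: map_gfun_sort_gens word_sorted_levels sw_rev)

end

theorem mainTheorem9:
  fixes a b :: nat and \<pi> :: "nat list"
  assumes "0 < a" and "0 < b" and "gcd a b = 1"
    and "\<pi> \<in> Dset a b"
  shows "word a (G a b \<pi>) = sw a b (rev (word a \<pi>))"
proof -
  have box: "is_partition_in_box a b \<pi>"
    and above: "\<forall>k\<le>length (word a \<pi>). 0 \<le> lvl a b (fst (pt (word a \<pi>) k)) (snd (pt (word a \<pi>) k))"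
    using assms(4) by (auto simp: Dset_def)
  interpret coprime_dyck_word a b "word a \<pi>"
    using assms(1-3) count_list_word[OF box] above
    by unfold_locales (auto simp: coprime_iff_gcd_eq_1)
  show ?thesis using word_G_eq_sw_rev by (simp add: G_def)
qed

end
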